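(* Let $G$ be a finite simple connected nonbipartite graph with edge ideal $I(G)\subseteq S=K[x_1,\ldots,x_n]$. Then $$\mathrm{dstab}(I(G))\le\min\{d_H : H \text{ is a spanning unicyclic nonbipartite subgraph of } G\}.$$
   Context: $K$ is a field and the vertices of $G$ are the variables $x_1,\ldots,x_n$; $I(G)$ is generated by the monomials $x_ix_j$ with $\{x_i,x_j\}\in E(G)$. For an ideal $I\subseteq S$, $\mathrm{dstab}(I)=\min\{t\ge0:\mathrm{depth}(I^t)=\mathrm{depth}(I^{t+i})\text{ for all }i\ge0\}$. A spanning subgraph of $G$ is a connected subgraph with the same vertex set as $G$; a spanning unicyclic nonbipartite subgraph is a spanning subgraph containing exactly one cycle, which has odd length. For such $H$ with unique cycle of length $2k+1$, let $E^*(H)$ be the set of edges of $H$ not on that cycle that are not leaves of $H$ (an edge $y_1y_2$ is a leaf of $H$ if $y_1$ or $y_2$ is adjacent to exactly one vertex in $H$), and set $d_H=|E^*(H)|+k+1$. *)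

theory Defs
  imports "HOL-Library.Poly_Mapping"
begin

text \<open>Polynomials in variables indexed by nat, coefficients in a field 'k:
  a finitely supported map from monomials (exponent vectors) to coefficients.\<close>
type_synonym 'k mpoly = "(nat \<Rightarrow>\<^sub>0 nat) \<Rightarrow>\<^sub>0 'k"

definition polyring :: "nat \<Rightarrow> ('k::field) mpoly set" where
  "polyring n = {p. \<forall>m \<in> Poly_Mapping.keys p. Poly_Mapping.keys m \<subseteq> {1..n}}"

definition Var :: "nat \<Rightarrow> ('k::field) mpoly" where
  "Var i = Poly_Mapping.single (Poly_Mapping.single i 1) 1"

definition ideal_gen :: "nat \<Rightarrow> ('k::field) mpoly set \<Rightarrow> 'k mpoly set" where
  "ideal_gen n A = {(\<Sum>a\<in>B. c a * a) | B c. finite B \<and> B \<subseteq> A \<and> (\<forall>a\<in>B. c a \<in> polyring n)}"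

fun ideal_pow :: "nat \<Rightarrow> ('k::field) mpoly set \<Rightarrow> nat \<Rightarrow> 'k mpoly set" where
  "ideal_pow n I 0 = polyring n"
| "ideal_pow n I (Suc t) = ideal_gen n {a * b | a b. a \<in> ideal_pow n I t \<and> b \<in> I}"

definition seq_mult :: "nat \<Rightarrow> ('k::field) mpoly list \<Rightarrow> 'k mpoly set \<Rightarrow> 'k mpoly set" where
  "seq_mult n fs M = ideal_gen n {f * m | f m. f \<in> set fs \<and> m \<in> M}"

definition max_ideal :: "nat \<Rightarrow> ('k::field) mpoly set" where
  "max_ideal n = ideal_gen n (Var ` {1..n})"

definition regular_seq :: "nat \<Rightarrow> ('k::field) mpoly set \<Rightarrow> 'k mpoly list \<Rightarrow> bool" where
  "regular_seq n M fs \<longleftrightarrow>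
     set fs \<subseteq> max_ideal n \<and>
     (\<forall>i < length fs. \<forall>u \<in> M. fs ! i * u \<in> seq_mult n (take i fs) M \<longrightarrow> u \<in> seq_mult n (take i fs) M) \<and>
     M \<noteq> seq_mult n fs M"

definition depth :: "nat \<Rightarrow> ('k::field) mpoly set \<Rightarrow> nat" where
  "depth n M = Sup {length fs | fs. regular_seq n M fs}"

definition dstab :: "nat \<Rightarrow> ('k::field) mpoly set \<Rightarrow> nat" where
  "dstab n I = (LEAST t. \<forall>i. depth n (ideal_pow n I t) = depth n (ideal_pow n I (t + i)))"

definition simple_graph :: "nat \<Rightarrow> nat set set \<Rightarrow> bool" where
  "simple_graph n E \<longleftrightarrow> (\<forall>e \<in> E. e \<subseteq> {1..n} \<and> card e = 2)"

definition adj :: "nat set set \<Rightarrow> nat \<Rightarrow> nat \<Rightarrow> bool" where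
  "adj E u v \<longleftrightarrow> {u, v} \<in> E \<and> u \<noteq> v"

definition connected_graph :: "nat \<Rightarrow> nat set set \<Rightarrow> bool" where
  "connected_graph n E \<longleftrightarrow> (\<forall>u \<in> {1..n}. \<forall>v \<in> {1..n}. (adj E)\<^sup>*\<^sup>* u v)"

definition bipartite :: "nat \<Rightarrow> nat set set \<Rightarrow> bool" where
  "bipartite n E \<longleftrightarrow> (\<exists>c :: nat \<Rightarrow> bool. \<forall>u v. adj E u v \<longrightarrow> c u \<noteq> c v)"

definition edge_ideal :: "nat \<Rightarrow> nat set set \<Rightarrow> ('k::field) mpoly set" where
  "edge_ideal n E = ideal_gen n {Var i * Var j | i j. {i, j} \<in> E \<and> i \<noteq> j}"

definition is_cycle_in :: "nat set set \<Rightarrow> nat set set \<Rightarrow> bool" where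
  "is_cycle_in H C \<longleftrightarrow> (\<exists>vs. distinct vs \<and> length vs \<ge> 3 \<and>
      C = {{vs ! i, vs ! ((i + 1) mod length vs)} | i. i < length vs} \<and> C \<subseteq> H)"

definition spanning_unicyclic_nonbip :: "nat \<Rightarrow> nat set set \<Rightarrow> nat set set \<Rightarrow> nat set set \<Rightarrow> bool" where
  "spanning_unicyclic_nonbip n E H C \<longleftrightarrow>
     H \<subseteq> E \<and> connected_graph n H \<and> is_cycle_in H C \<and>
     (\<forall>C'. is_cycle_in H C' \<longrightarrow> C' = C) \<and> odd (card C)"

definition degree :: "nat set set \<Rightarrow> nat \<Rightarrow> nat" where
  "degree H y = card {z. adj H y z}"

definition leaf_edge :: "nat set set \<Rightarrow> nat set \<Rightarrow> bool" where
  "leaf_edge H e \<longleftrightarrow> (\<exists>y \<in> e. degree H y = 1)"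

definition Estar :: "nat set set \<Rightarrow> nat set set \<Rightarrow> nat set set" where
  "Estar H C = {e \<in> H. e \<notin> C \<and> \<not> leaf_edge H e}"

text \<open>d_H = |E*(H)| + k + 1 where the cycle has length 2k+1.\<close>
definition dH :: "nat set set \<Rightarrow> nat set set \<Rightarrow> nat" where
  "dH H C = card (Estar H C) + (card C - 1) div 2 + 1"

end

(* Let H be a spanning unicyclic subgraph whose cycle C is odd, of length 2k + 1, and let t >= d_H.
   The monomial u = x^C * prod_{e in E*(H)} x^e * (x^e0)^(t - d_H), for a fixed edge e0, has degree
   2t - 1 and hence is not in I(G)^t, whereas x_j u is a product of t edge monomials for every vertex
   j: walk from j along a shortest path to C, once around C and back. As C is odd this closed walk
   has even length, so its vertex monomial is a product of edges; the path edges after the first are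
   non-leaf edges off the cycle, i.e. lie in E*(H), and the remaining edges of E*(H) and the powers
   of e0 supply the other factors. Thus u is a socle element of S/I^t, depth I^t = 1 for all
   t >= d_H, and dstab I(G) <= d_H. The minimum is attained: a connected non-bipartite graph has a
   closed walk with an odd number of edges, a shortest one is an odd cycle, and an odd cycle grows
   into a spanning unicyclic subgraph by attaching the remaining vertices one edge at a time. *)

theory Submission
  imports Defs
begin

section \<open>Ideals, monomials and depth\<close>

definition is_ideal :: "nat \<Rightarrow> ('k::field) mpoly set \<Rightarrow> bool" where
  "is_ideal n M \<longleftrightarrow> 0 \<in> M \<and> (\<forall>x\<in>M. \<forall>y\<in>M. x + y \<in> M) \<and> (\<forall>c\<in>polyring n. \<forall>x\<in>M. c * x \<in> M)"

lemma keys_add_nat: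
  "Poly_Mapping.keys (a + b :: nat \<Rightarrow>\<^sub>0 nat) = Poly_Mapping.keys a \<union> Poly_Mapping.keys b"
  by (auto simp: in_keys_iff lookup_add)

lemma one_in_polyring [simp]: "1 \<in> polyring n"
  by (simp add: polyring_def)

lemma polyring_add: "p \<in> polyring n \<Longrightarrow> q \<in> polyring n \<Longrightarrow> p + q \<in> polyring n"
  unfolding polyring_def using keys_add[of p q] by blast

lemma polyring_mult: "p \<in> polyring n \<Longrightarrow> q \<in> polyring n \<Longrightarrow> p * q \<in> polyring n"
  unfolding polyring_def using keys_mult[of p q] by (fastforce simp: keys_add_nat)

lemma is_ideal_polyring: "is_ideal n (polyring n)"
  unfolding is_ideal_def by (auto simp: polyring_add polyring_mult) (simp add: polyring_def)

lemma is_ideal_sum: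
  assumes "is_ideal n M" "\<And>a. a \<in> B \<Longrightarrow> f a \<in> M"
  shows "sum f B \<in> M"
  using assms(2) by (induction B rule: infinite_finite_induct) (use assms(1) in \<open>auto simp: is_ideal_def\<close>)

lemma mem_ideal_gen: "a \<in> A \<Longrightarrow> a \<in> ideal_gen n A"
  unfolding ideal_gen_def by (rule CollectI, rule exI[of _ "{a}"], rule exI[of _ "\<lambda>_. 1"]) simp

lemma ideal_gen_least: "is_ideal n M \<Longrightarrow> A \<subseteq> M \<Longrightarrow> ideal_gen n A \<subseteq> M"
  unfolding ideal_gen_def by (auto intro!: is_ideal_sum) (auto simp: is_ideal_def)

lemma is_ideal_ideal_gen:
  fixes A :: "('k::field) mpoly set"
  shows "is_ideal n (ideal_gen n A)"
  unfolding is_ideal_def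
proof (intro conjI ballI)
  show "0 \<in> ideal_gen n A"
    unfolding ideal_gen_def by (rule CollectI, rule exI[of _ "{}"]) simp
next
  fix x y assume "x \<in> ideal_gen n A" "y \<in> ideal_gen n A"
  then obtain B1 c1 B2 c2 where x: "x = (\<Sum>a\<in>B1. c1 a * a)" "finite B1" "B1 \<subseteq> A" "\<forall>a\<in>B1. c1 a \<in> polyring n"
    and y: "y = (\<Sum>a\<in>B2. c2 a * a)" "finite B2" "B2 \<subseteq> A" "\<forall>a\<in>B2. c2 a \<in> polyring n"
    unfolding ideal_gen_def by blast
  define c where "c a = (if a \<in> B1 then c1 a else 0) + (if a \<in> B2 then c2 a else 0)" for a
  have "x = (\<Sum>a\<in>B1 \<union> B2. (if a \<in> B1 then c1 a else 0) * a)"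
    unfolding x(1) by (rule sum.mono_neutral_cong_left) (use x y in auto)
  moreover have "y = (\<Sum>a\<in>B1 \<union> B2. (if a \<in> B2 then c2 a else 0) * a)"
    unfolding y(1) by (rule sum.mono_neutral_cong_left) (use x y in auto)
  ultimately have "x + y = (\<Sum>a\<in>B1 \<union> B2. c a * a)"
    by (simp add: c_def distrib_right sum.distrib)
  moreover have "\<forall>a\<in>B1 \<union> B2. c a \<in> polyring n"
    using x y by (auto simp: c_def intro!: polyring_add)
  ultimately show "x + y \<in> ideal_gen n A"
    unfolding ideal_gen_def using x y by blast
next
  fix d x :: "'k mpoly" assume d: "d \<in> polyring n" and "x \<in> ideal_gen n A"
  then obtain B c where x: "x = (\<Sum>a\<in>B. c a * a)" "finite B" "B \<subseteq> A" "\<forall>a\<in>B. c a \<in> polyring n"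
    unfolding ideal_gen_def by blast
  have "d * x = (\<Sum>a\<in>B. (d * c a) * a)"
    by (simp add: x(1) sum_distrib_left mult.assoc)
  then show "d * x \<in> ideal_gen n A"
    unfolding ideal_gen_def using x d by (auto intro!: exI[of _ B] polyring_mult)
qed

lemma is_ideal_ideal_pow: "is_ideal n (ideal_pow n I t)"
  by (cases t) (simp_all add: is_ideal_polyring is_ideal_ideal_gen)

lemma ideal_pow_Suc_mult: "a \<in> ideal_pow n I t \<Longrightarrow> b \<in> I \<Longrightarrow> a * b \<in> ideal_pow n I (Suc t)"
  by (auto intro!: mem_ideal_gen)

definition total_deg :: "(nat \<Rightarrow>\<^sub>0 nat) \<Rightarrow> nat" where
  "total_deg m = (\<Sum>i\<in>Poly_Mapping.keys m. Poly_Mapping.lookup m i)"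

lemma total_deg_add: "total_deg (a + b) = total_deg a + total_deg b"
  unfolding total_deg_def by (rule setsum_keys_plus_distrib) auto

lemma total_deg_single [simp]: "total_deg (Poly_Mapping.single i k) = k"
  by (simp add: total_deg_def)

lemma total_deg_zero [simp]: "total_deg 0 = 0"
  by (simp add: total_deg_def)

lemma total_deg_sum: "total_deg (sum f A) = (\<Sum>a\<in>A. total_deg (f a))"
  by (induction A rule: infinite_finite_induct) (auto simp: total_deg_add)

definition monom :: "(nat \<Rightarrow>\<^sub>0 nat) \<Rightarrow> ('k::field) mpoly" where
  "monom m = Poly_Mapping.single m 1"

lemma keys_monom [simp]: "Poly_Mapping.keys (monom m :: ('k::field) mpoly) = {m}"
  by (simp add: monom_def)

lemma monom_mult: "monom a * monom b = (monom (a + b) :: ('k::field) mpoly)"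
  by (simp add: monom_def mult_single)

lemma Var_eq_monom: "Var i = monom (Poly_Mapping.single i 1)"
  by (simp add: Var_def monom_def)

definition ord_ge :: "nat \<Rightarrow> ('k::field) mpoly \<Rightarrow> bool" where
  "ord_ge d p \<longleftrightarrow> (\<forall>m\<in>Poly_Mapping.keys p. d \<le> total_deg m)"

lemma ord_ge_mult: "ord_ge a p \<Longrightarrow> ord_ge b q \<Longrightarrow> ord_ge (a + b) (p * q)"
  unfolding ord_ge_def using keys_mult[of p q] by (fastforce simp: total_deg_add intro: add_mono)

lemma is_ideal_ord_ge: "is_ideal n {p :: ('k::field) mpoly. ord_ge d p}"
  unfolding is_ideal_def
proof (intro conjI ballI)
  fix c x :: "'k mpoly" assume "x \<in> {p. ord_ge d p}"
  then have "ord_ge (0 + d) (c * x)" by (intro ord_ge_mult) (auto simp: ord_ge_def)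
  then show "c * x \<in> {p. ord_ge d p}" by simp
qed (auto simp: ord_ge_def dest: set_mp[OF keys_add])

lemma ord_ge_ideal_pow:
  fixes p :: "('k::field) mpoly"
  assumes I: "I \<subseteq> {p. ord_ge d p}"
  shows "p \<in> ideal_pow n I t \<Longrightarrow> ord_ge (d * t) p"
proof (induction t arbitrary: p)
  case 0
  then show ?case by (simp add: ord_ge_def)
next
  case (Suc t)
  have "ord_ge (d * t + d) (a * b)" if "a \<in> ideal_pow n I t" "b \<in> I" for a b :: "'k mpoly"
    using ord_ge_mult[OF Suc.IH[OF that(1)], of d b] I that(2) by auto
  then have "ideal_pow n I (Suc t) \<subseteq> {p :: 'k mpoly. ord_ge (d * t + d) p}"
    unfolding ideal_pow.simps by (intro ideal_gen_least[OF is_ideal_ord_ge]) blast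
  then show ?case using Suc.prems by (auto simp: add.commute)
qed

lemma edge_ideal_ord_ge_2: "edge_ideal n E \<subseteq> {p :: ('k::field) mpoly. ord_ge 2 p}"
  unfolding edge_ideal_def
  by (rule ideal_gen_least[OF is_ideal_ord_ge]) (auto simp: Var_eq_monom monom_mult ord_ge_def total_deg_add)

lemma monom_notin_ideal_pow_edge_ideal:
  assumes "total_deg m < 2 * t"
  shows "(monom m :: ('k::field) mpoly) \<notin> ideal_pow n (edge_ideal n E) t"
proof
  assume "(monom m :: 'k mpoly) \<in> ideal_pow n (edge_ideal n E) t"
  then have "ord_ge (2 * t) (monom m :: 'k mpoly)" by (rule ord_ge_ideal_pow[OF edge_ideal_ord_ge_2])
  with assms show False by (simp add: ord_ge_def)
qed

lemma seq_mult_Nil: "seq_mult n [] M = {0}"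
  unfolding seq_mult_def ideal_gen_def by auto

lemma mult_in_seq_mult_single: "y \<in> M \<Longrightarrow> f * y \<in> seq_mult n [f] M"
  unfolding seq_mult_def by (rule mem_ideal_gen) auto

lemma seq_mult_single_imp_multiple:
  fixes M :: "('k::field) mpoly set"
  assumes M: "is_ideal n M" and x: "x \<in> seq_mult n [f] M"
  shows "\<exists>y\<in>M. x = f * y"
proof -
  have "is_ideal n {f * y | y. y \<in> M}"
    unfolding is_ideal_def
  proof (intro conjI ballI)
    show "0 \<in> {f * y |y. y \<in> M}" using M by (auto simp: is_ideal_def intro!: exI[of _ 0])
  next
    fix a b assume "a \<in> {f * y |y. y \<in> M}" "b \<in> {f * y |y. y \<in> M}"
    then show "a + b \<in> {f * y |y. y \<in> M}"
      using M by (auto simp: is_ideal_def distrib_left[symmetric])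
  next
    fix c a :: "'k mpoly" assume "c \<in> polyring n" "a \<in> {f * y |y. y \<in> M}"
    then show "c * a \<in> {f * y |y. y \<in> M}"
      using M by (auto simp: is_ideal_def mult.left_commute)
  qed
  then have "seq_mult n [f] M \<subseteq> {f * y | y. y \<in> M}"
    unfolding seq_mult_def by (rule ideal_gen_least) auto
  then show ?thesis using x by auto
qed

lemma max_ideal_mult_mem:
  assumes M: "is_ideal n M" and u: "\<forall>j\<in>{1..n}. Var j * u \<in> M" and f: "f \<in> max_ideal n"
  shows "f * u \<in> M"
proof -
  have "is_ideal n {f. f * u \<in> M}"
    using M by (auto simp: is_ideal_def distrib_right mult.assoc)
  then have "max_ideal n \<subseteq> {f. f * u \<in> M}"
    unfolding max_ideal_def by (rule ideal_gen_least) (use u in auto)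
  then show ?thesis using f by auto
qed

lemma Var_neq_0: "Var i \<noteq> 0"
  by (metis Var_def lookup_single_eq lookup_zero zero_neq_one)

text \<open>This is \<open>depth S/M = 0\<close> in module form: for a nonzerodivisor \<open>f\<^sub>1\<close> on \<open>M\<close>,
  the element \<open>f\<^sub>1 u\<close> is killed by the maximal ideal modulo \<open>f\<^sub>1 M\<close> without lying in
  \<open>f\<^sub>1 M\<close>, so no second element of a regular sequence exists.\<close>

lemma regular_seq_length_le_1:
  assumes M: "is_ideal n M" and uM: "u \<notin> M" and u: "\<forall>j\<in>{1..n}. Var j * u \<in> M" and n: "1 \<le> n"
    and fs: "regular_seq n M fs"
  shows "length fs \<le> 1"
proof (rule ccontr)
  assume "\<not> length fs \<le> 1"
  then obtain f1 f2 fs' where fs_eq: "fs = f1 # f2 # fs'"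
    by (cases fs; cases "tl fs") auto
  have f1m: "f1 \<in> max_ideal n" and f2m: "f2 \<in> max_ideal n"
    using fs unfolding regular_seq_def fs_eq by auto
  have reg: "\<And>i w. i < length fs \<Longrightarrow> w \<in> M \<Longrightarrow> fs ! i * w \<in> seq_mult n (take i fs) M
      \<Longrightarrow> w \<in> seq_mult n (take i fs) M"
    using fs unfolding regular_seq_def by blast
  have "u \<noteq> 0" using uM M by (auto simp: is_ideal_def)
  then have "Var 1 * u \<in> M" "Var 1 * u \<noteq> 0" using u n Var_neq_0 by auto
  then have "f1 \<noteq> 0"
    using reg[of 0 "Var 1 * u"] by (auto simp: seq_mult_Nil fs_eq)
  have "f1 * u \<in> M" by (rule max_ideal_mult_mem[OF M u f1m])
  moreover have "f2 * (f1 * u) \<in> seq_mult n [f1] M"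
    using mult_in_seq_mult_single[OF max_ideal_mult_mem[OF M u f2m], of f1 n]
    by (simp add: mult.left_commute)
  ultimately have "f1 * u \<in> seq_mult n [f1] M"
    using reg[of 1 "f1 * u"] by (simp add: fs_eq)
  then obtain y where "y \<in> M" "f1 * u = f1 * y" using seq_mult_single_imp_multiple[OF M] by blast
  then show False using \<open>f1 \<noteq> 0\<close> uM by simp
qed

lemma regular_seq_Var_1:
  assumes M: "is_ideal n M" and uM: "u \<notin> M" and u: "Var 1 * u \<in> M" and n: "1 \<le> n"
  shows "regular_seq n M [Var 1]"
  unfolding regular_seq_def
proof (intro conjI)
  show "set [Var 1] \<subseteq> max_ideal n" using n by (auto simp: max_ideal_def intro!: mem_ideal_gen)
  show "M \<noteq> seq_mult n [Var 1] M"
  proof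
    assume "M = seq_mult n [Var 1] M"
    then obtain y where "y \<in> M" "Var 1 * u = Var 1 * y"
      using u seq_mult_single_imp_multiple[OF M] by blast
    then show False using uM Var_neq_0 by auto
  qed
qed (use Var_neq_0 in \<open>auto simp: seq_mult_Nil\<close>)

lemma depth_eq_1_if_socle_element:
  assumes "is_ideal n M" "u \<notin> M" "\<forall>j\<in>{1..n}. Var j * u \<in> M" "1 \<le> n"
  shows "depth n M = 1"
  unfolding depth_def
proof (rule cSup_eq_maximum)
  have "Var 1 * u \<in> M" using assms(3,4) by simp
  then have "regular_seq n M [Var 1]" by (rule regular_seq_Var_1[OF assms(1,2) _ assms(4)])
  then show "1 \<in> {length fs |fs. regular_seq n M fs}" by force
qed (use regular_seq_length_le_1[OF assms] in blast)

section \<open>Products of edge monomials\<close>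

abbreviation var_exp :: "nat \<Rightarrow> (nat \<Rightarrow>\<^sub>0 nat)" where
  "var_exp i \<equiv> Poly_Mapping.single i 1"

definition set_exp :: "nat set \<Rightarrow> (nat \<Rightarrow>\<^sub>0 nat)" where
  "set_exp A = (\<Sum>x\<in>A. var_exp x)"

definition list_exp :: "nat list \<Rightarrow> (nat \<Rightarrow>\<^sub>0 nat)" where
  "list_exp xs = sum_list (map var_exp xs)"

lemma list_exp_simps [simp]:
  "list_exp [] = 0" "list_exp (x # xs) = var_exp x + list_exp xs" "list_exp (xs @ ys) = list_exp xs + list_exp ys"
  "list_exp (rev xs) = list_exp xs"
  by (simp_all add: list_exp_def flip: rev_map)

lemma list_exp_distinct: "distinct xs \<Longrightarrow> list_exp xs = set_exp (set xs)"
  by (simp add: list_exp_def set_exp_def sum.distinct_set_conv_list)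

lemma total_deg_set_exp: "finite A \<Longrightarrow> total_deg (set_exp A) = card A"
  by (simp add: set_exp_def total_deg_sum)

lemma set_exp_doubleton: "a \<noteq> b \<Longrightarrow> set_exp {a, b} = var_exp a + var_exp b"
  by (simp add: set_exp_def)

inductive edge_prod :: "nat set set \<Rightarrow> nat \<Rightarrow> (nat \<Rightarrow>\<^sub>0 nat) \<Rightarrow> bool" for E where
  edge_prod_0: "edge_prod E 0 0"
| edge_prod_Suc: "edge_prod E t s \<Longrightarrow> {a, b} \<in> E \<Longrightarrow> a \<noteq> b \<Longrightarrow> edge_prod E (Suc t) (s + var_exp a + var_exp b)"

lemma monom_in_ideal_pow_edge_ideal:
  "edge_prod E t s \<Longrightarrow> (monom s :: ('k::field) mpoly) \<in> ideal_pow n (edge_ideal n E) t"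
proof (induction rule: edge_prod.induct)
  case edge_prod_0
  then show ?case by (simp add: monom_def)
next
  case (edge_prod_Suc t s a b)
  have "(Var a * Var b :: 'k mpoly) \<in> edge_ideal n E"
    unfolding edge_ideal_def by (rule mem_ideal_gen) (use edge_prod_Suc.hyps in auto)
  with edge_prod_Suc.IH have "(monom s :: 'k mpoly) * (Var a * Var b) \<in> ideal_pow n (edge_ideal n E) (Suc t)"
    by (rule ideal_pow_Suc_mult)
  then show ?case by (simp add: Var_eq_monom monom_mult add.assoc)
qed

lemma edge_prod_add:
  assumes "edge_prod E t1 s1" "edge_prod E t2 s2"
  shows "edge_prod E (t1 + t2) (s1 + s2)"
  using assms(2)
proof (induction t2 s2 rule: edge_prod.induct)
  case (edge_prod_Suc t s a b)
  then show ?case using edge_prod.edge_prod_Suc[of E "t1 + t" "s1 + s" a b] by (simp add: add.assoc)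
qed (simp add: assms(1))

lemma edge_prod_sum:
  assumes "finite A" "\<And>a. a \<in> A \<Longrightarrow> f a \<in> E" "\<And>a. a \<in> A \<Longrightarrow> card (f a) = 2"
  shows "edge_prod E (card A) (\<Sum>a\<in>A. set_exp (f a))"
  using assms
proof (induction A rule: finite_induct)
  case empty
  then show ?case by (simp add: edge_prod_0)
next
  case (insert x A)
  obtain a b where "f x = {a, b}" "a \<noteq> b" using insert.prems(2)[of x] by (auto simp: card_2_iff)
  then have "edge_prod E 1 (set_exp (f x))"
    using edge_prod_Suc[OF edge_prod_0, of a b] insert.prems(1)[of x] by (simp add: set_exp_doubleton)
  then show ?case using edge_prod_add[of E 1 _ "card A"] insert by simp
qed

section \<open>Walks and cycles\<close>

lemma adj_sym: "adj H u v \<Longrightarrow> adj H v u"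
  by (auto simp: adj_def insert_commute)

lemma adj_mono: "adj H u v \<Longrightarrow> H \<subseteq> H' \<Longrightarrow> adj H' u v"
  by (auto simp: adj_def)

lemma rtranclp_adj_sym: "(adj H)\<^sup>*\<^sup>* u v \<Longrightarrow> (adj H)\<^sup>*\<^sup>* v u"
  using symp_rtranclp[of "adj H"] adj_sym by (metis sympD sympI)

lemma rtranclp_adj_mono: "(adj H)\<^sup>*\<^sup>* u v \<Longrightarrow> H \<subseteq> H' \<Longrightarrow> (adj H')\<^sup>*\<^sup>* u v"
  by (induction rule: rtranclp_induct) (auto intro: rtranclp.rtrancl_into_rtrancl adj_mono)

fun walk :: "nat set set \<Rightarrow> nat list \<Rightarrow> bool" where
  "walk H [] = True"
| "walk H [x] = True"
| "walk H (x # y # r) \<longleftrightarrow> adj H x y \<and> walk H (y # r)"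

lemma walk_Cons: "walk H (x # r) \<longleftrightarrow> walk H r \<and> (r \<noteq> [] \<longrightarrow> adj H x (hd r))"
  by (cases r) auto

lemma walk_append [simp]:
  "walk H (xs @ ys) \<longleftrightarrow> walk H xs \<and> walk H ys \<and> (xs \<noteq> [] \<longrightarrow> ys \<noteq> [] \<longrightarrow> adj H (last xs) (hd ys))"
  by (induction xs) (auto simp: walk_Cons)

lemma walk_shortcut:
  assumes "walk H (xs @ y # ys @ y # zs)"
  shows "walk H (xs @ y # zs)"
proof -
  have "walk H (y # zs)"
    using walk_append[of H "xs @ y # ys" "y # zs"] assms by (simp del: walk_append)
  moreover have "walk H (xs @ [y])"
    using walk_append[of H "xs @ [y]" "ys @ y # zs"] assms by (simp del: walk_append)
  ultimately show ?thesis by simp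
qed

lemma walk_iff_nth: "walk H xs \<longleftrightarrow> (\<forall>i. Suc i < length xs \<longrightarrow> adj H (xs ! i) (xs ! Suc i))"
proof (induction xs)
  case (Cons x xs)
  then show ?case
    by (cases xs) (auto simp: walk_Cons All_less_Suc2)
qed simp

lemma walk_rev: "walk H xs \<Longrightarrow> walk H (rev xs)"
  by (induction xs) (auto simp: walk_Cons adj_sym hd_rev last_rev)

lemma walk_mono: "walk H xs \<Longrightarrow> H \<subseteq> H' \<Longrightarrow> walk H' xs"
  by (induction xs) (auto simp: walk_Cons adj_def)

lemma rtranclp_adj_imp_walk:
  assumes "(adj H)\<^sup>*\<^sup>* u v"
  obtains xs where "walk H xs" "xs \<noteq> []" "hd xs = u" "last xs = v"
  using assms
proof (induction arbitrary: thesis rule: rtranclp_induct)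
  case base
  then show ?case by (metis last.simps list.sel(1) not_Cons_self2 walk.simps(2))
next
  case (step y z)
  then obtain xs where "walk H xs" "xs \<noteq> []" "hd xs = u" "last xs = y" by blast
  with step show ?case by (intro step.prems[of "xs @ [z]"]) auto
qed

lemma walk_imp_rtranclp: "walk H xs \<Longrightarrow> x \<in> set xs \<Longrightarrow> (adj H)\<^sup>*\<^sup>* (hd xs) x"
proof (induction xs)
  case (Cons y xs)
  then show ?case
    by (cases "x = y") (auto simp: walk_Cons intro: converse_rtranclp_into_rtranclp)
qed simp

lemma edge_prod_even_walk:
  "walk E zs \<Longrightarrow> even (length zs) \<Longrightarrow> edge_prod E (length zs div 2) (list_exp zs)"
proof (induction zs rule: induct_list012)
  case (3 x y r)
  then have "edge_prod E (length r div 2) (list_exp r)" "{x, y} \<in> E" "x \<noteq> y"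
    by (auto simp: adj_def walk_Cons)
  then show ?case using edge_prod_Suc by (fastforce simp: add_ac)
qed (simp_all add: edge_prod_0)

lemma Suc_mod_eq_imp_pred_mod: "a < (L::nat) \<Longrightarrow> (a + 1) mod L = i \<Longrightarrow> a = (i + L - 1) mod L"
  by (cases "a + 1 = L") auto

lemma Suc_pred_mod: "i < (L::nat) \<Longrightarrow> ((i + L - 1) mod L + 1) mod L = i"
  by (cases i) (auto simp: mod_Suc_eq)

lemma Suc_mod_neq_pred_mod: "3 \<le> (L::nat) \<Longrightarrow> i < L \<Longrightarrow> (i + 1) mod L \<noteq> (i + L - 1) mod L"
  by (cases i; cases "i + 1 = L") auto

definition cycle_edges :: "nat list \<Rightarrow> nat set set" where
  "cycle_edges vs = {{vs ! i, vs ! ((i + 1) mod length vs)} | i. i < length vs}"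

lemma is_cycle_in_iff:
  "is_cycle_in H C \<longleftrightarrow> (\<exists>vs. distinct vs \<and> 3 \<le> length vs \<and> C = cycle_edges vs \<and> C \<subseteq> H)"
  by (simp add: is_cycle_in_def cycle_edges_def)

lemma cycle_edges_subset_set: "e \<in> cycle_edges vs \<Longrightarrow> e \<subseteq> set vs"
  unfolding cycle_edges_def by (auto intro!: nth_mem mod_less_divisor)

lemma cycle_edges_image:
  "cycle_edges vs = (\<lambda>i. {vs ! i, vs ! ((i + 1) mod length vs)}) ` {..<length vs}"
  by (auto simp: cycle_edges_def)

lemma mod_length_less [simp]: "2 \<le> length xs \<Longrightarrow> k mod length xs < length xs"
  by (cases xs) auto

lemma adj_cycle_edges_Suc:
  assumes "distinct vs" "2 \<le> length vs" "a < length vs"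
  shows "adj (cycle_edges vs) (vs ! a) (vs ! ((a + 1) mod length vs))"
proof -
  have "(a + 1) mod length vs \<noteq> a" "(a + 1) mod length vs < length vs"
    using assms(2,3) by (cases "a + 1 = length vs", auto)+
  then show ?thesis using assms by (auto simp: adj_def cycle_edges_def nth_eq_iff_index_eq)
qed

lemma card_cycle_edges:
  assumes d: "distinct vs" and L: "3 \<le> length vs"
  shows "card (cycle_edges vs) = length vs"
proof -
  let ?L = "length vs"
  have "inj_on (\<lambda>i. {vs ! i, vs ! ((i + 1) mod ?L)}) {..<?L}"
  proof (rule inj_onI)
    fix i j assume i: "i \<in> {..<?L}" and j: "j \<in> {..<?L}"
      and eq: "{vs ! i, vs ! ((i + 1) mod ?L)} = {vs ! j, vs ! ((j + 1) mod ?L)}"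
    have "(i + 1) mod ?L < ?L" "(j + 1) mod ?L < ?L" using L by simp_all
    with eq i j d have "i = j \<or> (i = (j + 1) mod ?L \<and> (i + 1) mod ?L = j)"
      by (auto simp: doubleton_eq_iff nth_eq_iff_index_eq)
    then show "i = j"
      using Suc_mod_eq_imp_pred_mod[of j ?L i] Suc_mod_neq_pred_mod[OF L, of i] i j by auto
  qed
  then show ?thesis by (simp add: cycle_edges_image card_image)
qed

lemma cycle_neighbours:
  assumes d: "distinct vs" and L: "3 \<le> length vs" and i: "i < length vs"
  shows "{z. adj (cycle_edges vs) (vs ! i) z} = {vs ! ((i + 1) mod length vs), vs ! ((i + length vs - 1) mod length vs)}"
    (is "?N = {?s, ?p}")
proof
  show "?N \<subseteq> {?s, ?p}"
  proof
    fix z assume "z \<in> ?N"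
    then obtain a where a: "a < length vs" "{vs ! i, z} = {vs ! a, vs ! ((a + 1) mod length vs)}"
      by (auto simp: adj_def cycle_edges_def)
    have "(a + 1) mod length vs < length vs" using L by simp
    with a d i have "(i = a \<and> z = vs ! ((a + 1) mod length vs)) \<or> (i = (a + 1) mod length vs \<and> z = vs ! a)"
      by (auto simp: doubleton_eq_iff nth_eq_iff_index_eq)
    then show "z \<in> {?s, ?p}" using Suc_mod_eq_imp_pred_mod[OF a(1)] by auto
  qed
next
  have "adj (cycle_edges vs) (vs ! ((i + length vs - 1) mod length vs)) (vs ! i)"
    using adj_cycle_edges_Suc[OF d, of "(i + length vs - 1) mod length vs"] L Suc_pred_mod[OF i] by simp
  then show "{?s, ?p} \<subseteq> ?N" using adj_cycle_edges_Suc[OF d _ i] L by (auto intro: adj_sym)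
qed

lemma card_cycle_neighbours:
  assumes "distinct vs" "3 \<le> length vs" "x \<in> set vs"
  shows "card {z. adj (cycle_edges vs) x z} = 2"
proof -
  obtain i where i: "i < length vs" "x = vs ! i" using assms(3) by (auto simp: in_set_conv_nth)
  have "(i + 1) mod length vs \<noteq> (i + length vs - 1) mod length vs" "(i + 1) mod length vs < length vs"
    "(i + length vs - 1) mod length vs < length vs"
    using Suc_mod_neq_pred_mod[OF assms(2) i(1)] assms(2) by simp_all
  then show ?thesis using cycle_neighbours[OF assms(1,2) i(1)] assms(1) i(2) by (simp add: nth_eq_iff_index_eq)
qed

lemma walk_rotate_cycle:
  assumes d: "distinct vs" and L: "2 \<le> length vs" and H: "cycle_edges vs \<subseteq> H" and i: "i < length vs"
  shows "walk H (rotate i vs @ [vs ! i])"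
proof -
  let ?L = "length vs"
  have nth: "(rotate i vs @ [vs ! i]) ! j = vs ! ((i + j) mod ?L)" if "j \<le> ?L" for j
    using that i by (cases "j = ?L") (auto simp: nth_append nth_rotate)
  have "adj H (vs ! ((i + j) mod ?L)) (vs ! ((i + Suc j) mod ?L))" for j
    using adj_mono[OF adj_cycle_edges_Suc[OF d L, of "(i + j) mod ?L"] H] L
    by (simp add: mod_Suc_eq)
  then show ?thesis by (auto simp: walk_iff_nth nth)
qed

lemma walk_cycle:
  assumes "distinct vs" "2 \<le> length vs" "cycle_edges vs \<subseteq> H"
  shows "walk H vs"
proof -
  have "vs \<noteq> []" using assms(2) by auto
  then show ?thesis using walk_rotate_cycle[OF assms, of 0] by simp
qed

lemma cycle_edges_subset_if_walk:
  assumes "vs \<noteq> []" "walk H (vs @ [hd vs])"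
  shows "cycle_edges vs \<subseteq> H"
proof
  fix e assume "e \<in> cycle_edges vs"
  then obtain a where a: "a < length vs" "e = {vs ! a, vs ! ((a + 1) mod length vs)}"
    by (auto simp: cycle_edges_def)
  have "(vs @ [hd vs]) ! Suc a = vs ! ((a + 1) mod length vs)"
    using a(1) assms(1) by (cases "a + 1 = length vs") (auto simp: nth_append hd_conv_nth)
  then have "adj H (vs ! a) (vs ! ((a + 1) mod length vs))"
    using assms(2) a(1) by (auto simp: walk_iff_nth nth_append)
  then show "e \<in> H" using a(2) by (simp add: adj_def)
qed

lemma cycle_vertex_has_neighbour:
  assumes "distinct vs" "2 \<le> length vs" "cycle_edges vs \<subseteq> H" "x \<in> set vs"
  shows "\<exists>z\<in>set vs. adj H x z"
proof -
  obtain i where i: "i < length vs" "x = vs ! i" using assms(4) by (auto simp: in_set_conv_nth)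
  have "(i + 1) mod length vs < length vs" using assms(2) by simp
  then show ?thesis
    using adj_mono[OF adj_cycle_edges_Suc[OF assms(1,2) i(1)] assms(3)] i(2) nth_mem by blast
qed

lemma cycle_vertices_connected:
  assumes "distinct vs" "2 \<le> length vs" "x \<in> set vs" "y \<in> set vs"
  shows "(adj (cycle_edges vs))\<^sup>*\<^sup>* x y"
  using walk_imp_rtranclp[OF walk_cycle[OF assms(1,2) order_refl]] assms(3,4)
  by (meson rtranclp_adj_sym rtranclp_trans)

lemma cycle_edges_subset_imp_eq:
  assumes dv: "distinct vs" and Lv: "3 \<le> length vs" and dw: "distinct ws" and Lw: "3 \<le> length ws"
    and sub: "cycle_edges ws \<subseteq> cycle_edges vs"
  shows "cycle_edges ws = cycle_edges vs"
proof -
  have ws_vs: "set ws \<subseteq> set vs"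
    using cycle_vertex_has_neighbour[OF dw _ sub] Lw cycle_edges_subset_set by (fastforce simp: adj_def)
  have closed: "z \<in> set ws" if "x \<in> set ws" "adj (cycle_edges vs) x z" for x z
  proof -
    have "{z. adj (cycle_edges ws) x z} \<subseteq> {z. adj (cycle_edges vs) x z}"
      using sub by (auto intro: adj_mono)
    moreover have "finite {z. adj (cycle_edges vs) x z}"
      using card_cycle_neighbours[OF dv Lv] ws_vs that(1) card.infinite by fastforce
    ultimately have "{z. adj (cycle_edges ws) x z} = {z. adj (cycle_edges vs) x z}"
      using card_cycle_neighbours[OF dv Lv] card_cycle_neighbours[OF dw Lw] ws_vs that(1)
      by (metis card_subset_eq subsetD)
    then show ?thesis using that(2) cycle_edges_subset_set by (auto simp: adj_def)
  qed
  have "y \<in> set ws" if "(adj (cycle_edges vs))\<^sup>*\<^sup>* x y" "x \<in> set ws" for x y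
    using that by (induction rule: rtranclp_induct) (auto intro: closed)
  moreover obtain x where "x \<in> set ws" using Lw by (cases ws) auto
  ultimately have "set vs \<subseteq> set ws"
    using cycle_vertices_connected[OF dv] Lv ws_vs by fastforce
  with ws_vs have "length ws = length vs"
    using distinct_card[OF dv] distinct_card[OF dw] by auto
  then show ?thesis
    using card_subset_eq[OF _ sub] card_cycle_edges[OF dv Lv] card_cycle_edges[OF dw Lw]
    by (simp add: cycle_edges_image)
qed

section \<open>Paths to the odd cycle\<close>

fun path_edges :: "nat list \<Rightarrow> nat set set" where
  "path_edges [] = {}"
| "path_edges [x] = {}"
| "path_edges (x # y # r) = insert {x, y} (path_edges (y # r))"

lemma path_edges_subset_set: "e \<in> path_edges xs \<Longrightarrow> e \<subseteq> set xs"
  by (induction xs rule: path_edges.induct) auto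

lemma finite_path_edges: "finite (path_edges xs)"
  by (induction xs rule: path_edges.induct) auto

lemma card_path_edges: "distinct xs \<Longrightarrow> card (path_edges xs) = length xs - 1"
proof (induction xs rule: path_edges.induct)
  case (3 x y r)
  then have "{x, y} \<notin> path_edges (y # r)" using path_edges_subset_set by fastforce
  then show ?case using 3 by (simp add: finite_path_edges)
qed auto

lemma list_exp_path_edges:
  "distinct xs \<Longrightarrow> xs \<noteq> [] \<Longrightarrow>
    var_exp (hd xs) + sum set_exp (path_edges xs) + var_exp (last xs) = list_exp xs + list_exp xs"
proof (induction xs rule: path_edges.induct)
  case (3 x y r)
  then have "{x, y} \<notin> path_edges (y # r)" using path_edges_subset_set by fastforce
  then show ?case using 3 by (simp add: finite_path_edges set_exp_doubleton add_ac)
qed auto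

lemma shortest_walk_to_set:
  assumes "walk H p0" "p0 \<noteq> []" "last p0 \<in> T"
  obtains p where "walk H p" "p \<noteq> []" "hd p = hd p0" "last p \<in> T" "distinct p" "set (butlast p) \<inter> T = {}"
proof -
  define P where "P p \<longleftrightarrow> walk H p \<and> p \<noteq> [] \<and> hd p = hd p0 \<and> last p \<in> T" for p
  have "P p0" using assms by (simp add: P_def)
  then obtain p where Pp: "P p" and min: "\<And>p'. P p' \<Longrightarrow> length p \<le> length p'"
    using ex_has_least_nat[of P p0 length] by blast
  have "distinct p"
  proof (rule ccontr)
    assume "\<not> distinct p"
    then obtain xs y ys zs where p: "p = xs @ [y] @ ys @ [y] @ zs"
      using not_distinct_decomp by blast
    then have "P (xs @ [y] @ zs)" using Pp walk_shortcut[of H xs y ys zs] by (auto simp: P_def hd_append)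
    then show False using min p by fastforce
  qed
  moreover have "set (butlast p) \<inter> T = {}"
  proof (rule ccontr)
    assume "set (butlast p) \<inter> T \<noteq> {}"
    then obtain xs x ys where bp: "butlast p = xs @ x # ys" "x \<in> T" by (blast dest: split_list)
    define l where "l = last p"
    have p: "p = xs @ x # ys @ [l]"
      using Pp bp(1) unfolding l_def P_def by (metis append_butlast_last_id append.assoc append_Cons)
    then have "P (xs @ [x])" using Pp bp(2) by (auto simp: P_def hd_append)
    then show False using min p by fastforce
  qed
  ultimately show thesis using that Pp unfolding P_def by blast
qed

lemma degree_ne_1: "adj H y a \<Longrightarrow> adj H y b \<Longrightarrow> a \<noteq> b \<Longrightarrow> degree H y \<noteq> 1"
  unfolding degree_def by (metis card_1_singletonE mem_Collect_eq singletonD)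

text \<open>Inner vertices of the path have two neighbours on it and its last vertex has a further
  neighbour on the cycle, so no edge after the first one is a leaf edge.\<close>

lemma path_edges_tl_subset_Estar:
  assumes cyc: "distinct vs" "2 \<le> length vs" "C = cycle_edges vs" "C \<subseteq> H"
    and p: "walk H p" "distinct p" "p \<noteq> []" "last p \<in> set vs" "set (butlast p) \<inter> set vs = {}"
  shows "path_edges (tl p) \<subseteq> Estar H C"
  using p
proof (induction p rule: induct_list012)
  case (3 x y r)
  show ?case
  proof (cases r)
    case (Cons z r')
    have IH: "path_edges (z # r') \<subseteq> Estar H C"
      using 3 Cons by (auto simp: walk_Cons)
    have y: "adj H y x" "adj H y z" "y \<notin> set vs" "x \<noteq> z"
      using "3.prems" Cons by (auto simp: adj_sym)
    have "degree H z \<noteq> 1"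
    proof (cases r')
      case Nil
      then obtain w where "w \<in> set vs" "adj H z w"
        using cycle_vertex_has_neighbour[OF cyc(1,2) cyc(4)[unfolded cyc(3)], of z] "3.prems"(4) Cons
        by auto
      then show ?thesis using y degree_ne_1[of H z y w] Cons by (auto simp: adj_sym)
    next
      case (Cons u r'')
      then show ?thesis
        using "3.prems"(1,2) \<open>r = z # r'\<close> degree_ne_1[of H z y u] by (auto simp: adj_sym)
    qed
    moreover have "{y, z} \<notin> C" using y(3) cyc(3) cycle_edges_subset_set by blast
    ultimately have "{y, z} \<in> Estar H C"
      using y degree_ne_1[OF y(1,2,4)] by (auto simp: Estar_def leaf_edge_def adj_def)
    then show ?thesis using IH Cons by simp
  qed simp
qed simp_all

lemma closed_walk_around_cycle:
  assumes "distinct vs" "2 \<le> length vs" "cycle_edges vs \<subseteq> H" "w \<in> set vs"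
  obtains cs where "walk H (w # cs @ [w])" "var_exp w + list_exp cs = set_exp (set vs)"
    "length cs = length vs - 1"
proof -
  obtain i where i: "i < length vs" "w = vs ! i" using assms(4) by (auto simp: in_set_conv_nth)
  have "vs \<noteq> []" using i(1) by auto
  then have "rotate i vs ! 0 = w" using i by (simp add: nth_rotate)
  then have rot: "rotate i vs = w # tl (rotate i vs)"
    using assms(2) by (cases "rotate i vs") auto
  have "list_exp (rotate i vs) = set_exp (set vs)"
    using assms(1) by (simp add: list_exp_distinct)
  then show thesis
    using that walk_rotate_cycle[OF assms(1-3) i(1)] rot i(2) by (metis append_Cons length_rotate length_tl list_exp_simps(2))
qed

text \<open>Walk along \<open>q\<close> to the cycle, once around the odd cycle, and back along \<open>q\<close> to its
  second vertex: this walk has odd length, so prepending a neighbour of \<open>hd q\<close> or appending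
  \<open>hd q\<close> itself gives an even walk, whose vertex monomial is a product of edges.\<close>

lemma odd_walk_around_cycle:
  assumes cyc: "distinct vs" "length vs = 2 * k + 1" "1 \<le> k" "cycle_edges vs \<subseteq> E"
    and q: "walk E q" "distinct q" "q \<noteq> []" "last q \<in> set vs"
  obtains W where "walk E W" "W \<noteq> []" "hd W = hd q" "adj E (last W) (hd q)"
    "length W + 1 = 2 * (length q + k)" "list_exp W = sum set_exp (path_edges q) + set_exp (set vs)"
proof -
  obtain cs where cs: "walk E (last q # cs @ [last q])" "var_exp (last q) + list_exp cs = set_exp (set vs)"
    "length cs = 2 * k"
    using closed_walk_around_cycle[OF cyc(1) _ cyc(4) q(4)] cyc(2,3) by auto
  have cs_ne: "cs \<noteq> []" using cs(3) cyc(3) by auto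
  have cs_walk: "walk E cs" "adj E (last q) (hd cs)" "adj E (last cs) (last q)"
    using cs(1) cs_ne by (auto simp: walk_Cons)
  define W where "W = q @ cs @ rev (tl q)"
  have "walk E (tl q)" using q(1,3) by (cases q) (auto simp: walk_Cons)
  moreover have "tl q \<noteq> [] \<Longrightarrow> last (tl q) = last q" using q(3) by (cases q) auto
  ultimately have "walk E (cs @ rev (tl q))"
    using cs_walk by (auto simp: walk_rev hd_rev)
  then have W_walk: "walk E W" using q(1) cs_walk(2) cs_ne by (simp add: W_def)
  have W_last: "adj E (last W) (hd q)"
  proof (cases "tl q")
    case Nil
    then have "last q = hd q" using q(3) by (cases q) auto
    then show ?thesis using cs_walk(3) cs_ne Nil by (simp add: W_def)
  next
    case (Cons y ys)
    then have "adj E (hd q) y" using q(1,3) by (cases q) auto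
    then show ?thesis using Cons by (simp add: W_def adj_sym)
  qed
  have "list_exp q = var_exp (hd q) + list_exp (tl q)" using q(3) by (cases q) auto
  then have "list_exp W + var_exp (hd q) = (list_exp q + list_exp q) + list_exp cs"
    by (simp add: W_def add_ac)
  also have "\<dots> = var_exp (hd q) + sum set_exp (path_edges q) + (var_exp (last q) + list_exp cs)"
    unfolding list_exp_path_edges[OF q(2,3), symmetric] by (simp add: add_ac)
  finally have "list_exp W + var_exp (hd q) = (sum set_exp (path_edges q) + set_exp (set vs)) + var_exp (hd q)"
    by (simp add: add_ac flip: cs(2))
  then have "list_exp W = sum set_exp (path_edges q) + set_exp (set vs)"
    by (rule add_right_imp_eq)
  moreover have "length W + 1 = 2 * (length q + k)" "W \<noteq> []" "hd W = hd q"
    using cs(3) q(3) by (simp_all add: W_def)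
  ultimately show thesis using that W_walk W_last by blast
qed

lemma edge_prod_path_to_odd_cycle:
  assumes cyc: "distinct vs" "length vs = 2 * k + 1" "1 \<le> k" "cycle_edges vs \<subseteq> E"
    and q: "walk E q" "distinct q" "q \<noteq> []" "last q \<in> set vs"
  shows "edge_prod E (length q + k) (var_exp (hd q) + sum set_exp (path_edges q) + set_exp (set vs))"
    and "adj E v (hd q) \<Longrightarrow>
      edge_prod E (length q + k) (var_exp v + sum set_exp (path_edges q) + set_exp (set vs))"
proof -
  obtain W where W: "walk E W" "W \<noteq> []" "hd W = hd q" "adj E (last W) (hd q)"
    "length W + 1 = 2 * (length q + k)" "list_exp W = sum set_exp (path_edges q) + set_exp (set vs)"
    using odd_walk_around_cycle[OF cyc q] .
  have "edge_prod E (length (W @ [hd q]) div 2) (list_exp (W @ [hd q]))"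
    using W by (intro edge_prod_even_walk) auto
  then show "edge_prod E (length q + k) (var_exp (hd q) + sum set_exp (path_edges q) + set_exp (set vs))"
    using W(5,6) by (simp add: add_ac)
  assume "adj E v (hd q)"
  then have "edge_prod E (length (v # W) div 2) (list_exp (v # W))"
    using W by (intro edge_prod_even_walk) (auto simp: walk_Cons)
  then show "edge_prod E (length q + k) (var_exp v + sum set_exp (path_edges q) + set_exp (set vs))"
    using W(5,6) by (simp add: add.assoc)
qed

section \<open>The socle monomial\<close>

lemma simple_graph_finite: "simple_graph n E \<Longrightarrow> finite E"
  unfolding simple_graph_def by (rule finite_subset[of _ "Pow {1..n}"]) auto

lemma simple_graph_adj_vertex: "simple_graph n E \<Longrightarrow> adj E u v \<Longrightarrow> u \<in> {1..n}"
  unfolding simple_graph_def adj_def by blast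

lemma simple_graph_cycle_vertices:
  assumes "simple_graph n E" "distinct vs" "2 \<le> length vs" "cycle_edges vs \<subseteq> E"
  shows "set vs \<subseteq> {1..n}"
  using cycle_vertex_has_neighbour[OF assms(2-4)] simple_graph_adj_vertex[OF assms(1)] by blast

lemma spanning_unicyclic_nonbip_cycle:
  assumes "spanning_unicyclic_nonbip n E H C"
  obtains vs k where "distinct vs" "length vs = 2 * k + 1" "1 \<le> k" "C = cycle_edges vs" "C \<subseteq> H"
    "card C = length vs"
proof -
  obtain vs where vs: "distinct vs" "3 \<le> length vs" "C = cycle_edges vs" "C \<subseteq> H"
    using assms by (auto simp: spanning_unicyclic_nonbip_def is_cycle_in_iff)
  moreover have "odd (length vs)"
    using assms card_cycle_edges[OF vs(1,2)] vs(3) by (simp add: spanning_unicyclic_nonbip_def)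
  ultimately show thesis
    using that[of vs "(length vs - 1) div 2"] card_cycle_edges[OF vs(1,2)] by (auto elim!: oddE)
qed

lemma edge_prod_vertex_times_cycle:
  assumes sg: "simple_graph n E" and su: "spanning_unicyclic_nonbip n E H C"
    and cyc: "distinct vs" "length vs = 2 * k + 1" "1 \<le> k" "C = cycle_edges vs" "C \<subseteq> H"
    and j: "j \<in> {1..n}"
  obtains R where "R \<subseteq> Estar H C" "edge_prod E (card R + k + 1) (var_exp j + sum set_exp R + set_exp (set vs))"
proof -
  have HE: "H \<subseteq> E" and con: "connected_graph n H" using su by (auto simp: spanning_unicyclic_nonbip_def)
  have cyc_E: "cycle_edges vs \<subseteq> E" using cyc(4,5) HE by blast
  have vs0: "vs ! 0 \<in> set vs" using cyc(2) by simp
  moreover have "set vs \<subseteq> {1..n}" using simple_graph_cycle_vertices[OF sg cyc(1) _ cyc_E] cyc(2,3) by auto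
  ultimately have "(adj H)\<^sup>*\<^sup>* j (vs ! 0)" using con j unfolding connected_graph_def by blast
  then obtain p0 where "walk H p0" "p0 \<noteq> []" "hd p0 = j" "last p0 = vs ! 0"
    by (rule rtranclp_adj_imp_walk)
  then obtain p where p: "walk H p" "p \<noteq> []" "hd p = j" "last p \<in> set vs" "distinct p"
    "set (butlast p) \<inter> set vs = {}"
    using vs0 by (metis shortest_walk_to_set)
  have tl_S: "path_edges (tl p) \<subseteq> Estar H C"
    using path_edges_tl_subset_Estar[OF cyc(1) _ cyc(4,5) p(1,5,2,4,6)] cyc(2,3) by simp
  have pE: "walk E p" using walk_mono[OF p(1) HE] .
  show thesis
  proof (cases "path_edges p \<subseteq> Estar H C")
    case True
    then show thesis
      using that[of "path_edges p"] edge_prod_path_to_odd_cycle(1)[OF cyc(1-3) cyc_E pE p(5,2,4)] p(2,3,5)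
      by (cases p) (auto simp: card_path_edges)
  next
    case False
    then obtain q where q: "p = j # q" "q \<noteq> []" using p(2,3) by (cases p; cases "tl p") auto
    have "adj E j (hd q)" "walk E q" using pE q by (auto simp: walk_Cons)
    then show thesis
      using that[of "path_edges q"] edge_prod_path_to_odd_cycle(2)[OF cyc(1-3) cyc_E _ _ q(2)] p q tl_S
      by (cases q) (auto simp: card_path_edges)
  qed
qed

lemma total_deg_set_exp_edge: "simple_graph n E \<Longrightarrow> e \<in> E \<Longrightarrow> total_deg (set_exp e) = 2"
  unfolding simple_graph_def by (metis card.infinite total_deg_set_exp zero_neq_numeral)

lemma socle_exponent:
  assumes sg: "simple_graph n E" and su: "spanning_unicyclic_nonbip n E H C"
  obtains m where "total_deg m + 1 = 2 * dH H C" "\<And>j. j \<in> {1..n} \<Longrightarrow> edge_prod E (dH H C) (var_exp j + m)"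
proof -
  obtain vs k where cyc: "distinct vs" "length vs = 2 * k + 1" "1 \<le> k" "C = cycle_edges vs" "C \<subseteq> H"
    and card_C: "card C = length vs"
    using spanning_unicyclic_nonbip_cycle[OF su] by blast
  define S where "S = Estar H C"
  have S_E: "S \<subseteq> E" using su by (auto simp: S_def Estar_def spanning_unicyclic_nonbip_def)
  have fin_S: "finite S" using finite_subset[OF S_E simple_graph_finite[OF sg]] .
  have E2: "e \<in> E \<Longrightarrow> card e = 2" for e using sg by (simp add: simple_graph_def)
  have dH: "dH H C = card S + k + 1" using cyc(2) card_C by (simp add: dH_def S_def)
  define m where "m = set_exp (set vs) + sum set_exp S"
  have deg: "total_deg m = (2 * k + 1) + 2 * card S"
    using cyc(1,2) S_E total_deg_set_exp_edge[OF sg]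
    by (simp add: m_def total_deg_add total_deg_sum total_deg_set_exp distinct_card subset_iff)
  have "edge_prod E (dH H C) (var_exp j + m)" if j: "j \<in> {1..n}" for j
  proof -
    obtain R where R: "R \<subseteq> S" "edge_prod E (card R + k + 1) (var_exp j + sum set_exp R + set_exp (set vs))"
      using edge_prod_vertex_times_cycle[OF sg su cyc j] unfolding S_def by blast
    have "edge_prod E (card (S - R)) (sum set_exp (S - R))"
      using edge_prod_sum[of "S - R" "\<lambda>e. e"] fin_S S_E E2 by auto
    with R(2) have "edge_prod E ((card R + k + 1) + card (S - R))
        ((var_exp j + sum set_exp R + set_exp (set vs)) + sum set_exp (S - R))"
      by (rule edge_prod_add)
    moreover have "(card R + k + 1) + card (S - R) = dH H C"
      using card_mono[OF fin_S R(1)] card_Diff_subset[OF finite_subset[OF R(1) fin_S] R(1)] dH by simp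
    moreover have "sum set_exp S = sum set_exp (S - R) + sum set_exp R"
      using sum.subset_diff[OF R(1) fin_S] by simp
    ultimately show ?thesis by (simp add: m_def add_ac)
  qed
  moreover have "total_deg m + 1 = 2 * dH H C" using deg dH by simp
  ultimately show thesis using that by blast
qed

text \<open>For \<open>t > d\<^sub>H\<close> the socle monomial is padded with a power of a fixed edge.\<close>

lemma depth_ideal_pow_edge_ideal_eq_1:
  assumes sg: "simple_graph n E" and su: "spanning_unicyclic_nonbip n E H C" and t: "dH H C \<le> t"
  shows "depth n (ideal_pow n (edge_ideal n E :: ('k::field) mpoly set) t) = 1"
proof -
  obtain m where deg: "total_deg m + 1 = 2 * dH H C"
    and m: "\<And>j. j \<in> {1..n} \<Longrightarrow> edge_prod E (dH H C) (var_exp j + m)"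
    using socle_exponent[OF sg su] by blast
  obtain vs k where cyc: "length vs = 2 * k + 1" "C = cycle_edges vs" "C \<subseteq> H"
    using spanning_unicyclic_nonbip_cycle[OF su] by blast
  have "C \<noteq> {}" using cyc(1,2) by (auto simp: cycle_edges_def)
  then obtain e where e: "e \<in> E" using cyc(3) su by (auto simp: spanning_unicyclic_nonbip_def)
  have "e \<subseteq> {1..n}" "card e = 2" using sg e by (simp_all add: simple_graph_def)
  then have n: "1 \<le> n" by (cases "n = 0") auto
  define m' where "m' = m + (\<Sum>i < t - dH H C. set_exp e)"
  have "total_deg m' < 2 * t"
    using deg t total_deg_set_exp_edge[OF sg e] by (simp only: m'_def total_deg_add total_deg_sum) simp
  moreover have prod: "edge_prod E t (var_exp j + m')" if "j \<in> {1..n}" for j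
    using edge_prod_add[OF m[OF that] edge_prod_sum[of "{..<t - dH H C}" "\<lambda>_. e"]] e sg t
    by (simp add: m'_def add.assoc simple_graph_def)
  have "\<forall>j\<in>{1..n}. Var j * monom m' \<in> ideal_pow n (edge_ideal n E :: 'k mpoly set) t"
    using monom_in_ideal_pow_edge_ideal[OF prod, where n = n and 'k = 'k] by (simp add: Var_eq_monom monom_mult)
  ultimately show ?thesis
    by (intro depth_eq_1_if_socle_element[OF is_ideal_ideal_pow monom_notin_ideal_pow_edge_ideal _ n])
qed

lemma dstab_edge_ideal_le_dH:
  assumes "simple_graph n E" "spanning_unicyclic_nonbip n E H C"
  shows "dstab n (edge_ideal n E :: ('k::field) mpoly set) \<le> dH H C"
proof -
  have depth: "depth n (ideal_pow n (edge_ideal n E :: 'k mpoly set) (dH H C + i)) = 1" for i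
    by (rule depth_ideal_pow_edge_ideal_eq_1[OF assms]) simp
  show ?thesis unfolding dstab_def using depth[of 0] depth by (intro Least_le) simp
qed

section \<open>Existence of spanning unicyclic nonbipartite subgraphs\<close>

lemma odd_closed_walk_if_not_bipartite:
  assumes sg: "simple_graph n E" and con: "connected_graph n E" and nb: "\<not> bipartite n E"
  obtains w where "walk E w" "w \<noteq> []" "hd w = last w" "even (length w)"
proof (rule ccontr)
  assume "\<not> thesis"
  then have no_walk: "\<not> (walk E w \<and> w \<noteq> [] \<and> hd w = last w \<and> even (length w))" for w
    using that by blast
  define c where "c v \<longleftrightarrow> (\<exists>xs. walk E xs \<and> xs \<noteq> [] \<and> hd xs = 1 \<and> last xs = v \<and> odd (length xs))" for v
  have "c u \<noteq> c v" if uv: "adj E u v" for u v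
  proof
    assume cuv: "c u = c v"
    have "u \<in> {1..n}" "v \<in> {1..n}" using uv simple_graph_adj_vertex[OF sg] adj_sym by blast+
    then have reach: "(adj E)\<^sup>*\<^sup>* 1 u" "(adj E)\<^sup>*\<^sup>* 1 v" using con by (auto simp: connected_graph_def)
    obtain xs ys where xs: "walk E xs" "xs \<noteq> []" "hd xs = 1" "last xs = u"
      and ys: "walk E ys" "ys \<noteq> []" "hd ys = 1" "last ys = v" and par: "even (length xs + length ys)"
    proof (cases "c u")
      case True
      obtain xs where "walk E xs" "xs \<noteq> []" "hd xs = 1" "last xs = u" "odd (length xs)"
        using True unfolding c_def by blast
      moreover obtain ys where "walk E ys" "ys \<noteq> []" "hd ys = 1" "last ys = v" "odd (length ys)"
        using True cuv unfolding c_def by blast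
      ultimately show thesis using that by simp
    next
      case False
      obtain xs where xs: "walk E xs" "xs \<noteq> []" "hd xs = 1" "last xs = u"
        using rtranclp_adj_imp_walk[OF reach(1)] by blast
      moreover obtain ys where ys: "walk E ys" "ys \<noteq> []" "hd ys = 1" "last ys = v"
        using rtranclp_adj_imp_walk[OF reach(2)] by blast
      moreover have "even (length xs)" "even (length ys)"
        using False cuv xs ys unfolding c_def by blast+
      ultimately show thesis using that by simp
    qed
    then have "walk E (xs @ rev ys)" "hd (xs @ rev ys) = last (xs @ rev ys)"
      using uv by (auto simp: walk_rev hd_rev last_rev)
    then show False using no_walk[of "xs @ rev ys"] xs(2) par by simp
  qed
  then have "bipartite n E" unfolding bipartite_def by (intro exI[of _ c]) blast
  with nb show False ..
qed

lemma walk_infix: "walk H (xs @ ys @ zs) \<Longrightarrow> walk H ys"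
  by simp

lemma closed_walk_split:
  assumes w: "walk H (a @ [x] @ b @ [x] @ c @ [z])" and z: "hd (a @ [x]) = z"
  shows "walk H (x # b @ [x])" and "walk H ((x # c) @ (a @ [x]))"
proof -
  have "a @ [x] @ b @ [x] @ c @ [z] = a @ (x # b @ [x]) @ (c @ [z])" by simp
  from w[unfolded this] show "walk H (x # b @ [x])" by (rule walk_infix)
  have "a @ [x] @ b @ [x] @ c @ [z] = (a @ [x] @ b) @ ((x # c) @ [z]) @ []" by simp
  from w[unfolded this] have "walk H ((x # c) @ [z])" by (rule walk_infix)
  then have "walk H (x # c)" "adj H (last (x # c)) z"
    using walk_append[of H "x # c" "[z]"] by (simp_all del: walk_append)
  moreover have "a @ [x] @ b @ [x] @ c @ [z] = [] @ (a @ [x]) @ (b @ [x] @ c @ [z])" by simp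
  from w[unfolded this] have "walk H (a @ [x])" by (rule walk_infix)
  ultimately show "walk H ((x # c) @ (a @ [x]))"
    using z by (intro walk_append[THEN iffD2]) auto
qed

text \<open>A shortest closed walk with an odd number of edges is a cycle: at a repeated vertex it
  would split into two shorter closed walks, one of which has an odd number of edges.\<close>

lemma odd_cycle_if_odd_closed_walk:
  assumes "walk E w" "w \<noteq> []" "hd w = last w" "even (length w)"
  obtains vs where "distinct vs" "3 \<le> length vs" "cycle_edges vs \<subseteq> E" "odd (length vs)"
proof -
  define P where "P w \<longleftrightarrow> walk E w \<and> w \<noteq> [] \<and> hd w = last w \<and> even (length w)" for w
  obtain w0 where P0: "P w0" and min: "\<And>w'. P w' \<Longrightarrow> length w0 \<le> length w'"
    using ex_has_least_nat[of P w length] assms by (auto simp: P_def)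
  then obtain vs z where w0: "w0 = vs @ [z]" by (cases w0 rule: rev_cases) (auto simp: P_def)
  have ww: "walk E (vs @ [z])" and hd: "hd (vs @ [z]) = z" and even: "even (length vs + 1)"
    using P0 w0 by (auto simp: P_def)
  have vs_ne: "vs \<noteq> []" using even by auto
  then have z: "z = hd vs" using hd by simp
  have "distinct vs"
  proof (rule ccontr)
    assume "\<not> distinct vs"
    then obtain a x b c where vs: "vs = a @ [x] @ b @ [x] @ c" using not_distinct_decomp by blast
    have "hd (a @ [x]) = z" using z vs by (cases a) auto
    note split = closed_walk_split[OF ww[unfolded vs append_assoc] this]
    have "length (x # b @ [x]) + length ((x # c) @ (a @ [x])) = (length vs + 1) + 1" using vs by simp
    then have "even (length (x # b @ [x])) \<or> even (length ((x # c) @ (a @ [x])))"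
      using even by presburger
    then have "P (x # b @ [x]) \<or> P ((x # c) @ (a @ [x]))" using split by (auto simp: P_def)
    then have "length w0 \<le> length (x # b @ [x]) \<or> length w0 \<le> length ((x # c) @ (a @ [x]))"
      using min by blast
    then show False using w0 vs by auto
  qed
  moreover have "cycle_edges vs \<subseteq> E"
    using cycle_edges_subset_if_walk[OF vs_ne] ww z by simp
  moreover have "odd (length vs)" using even by simp
  moreover have "length vs \<noteq> 1"
  proof
    assume "length vs = 1"
    then obtain x where "vs = [x]" by (auto simp: length_Suc_conv)
    then show False using ww z by (simp add: adj_def)
  qed
  moreover have "3 \<le> length vs" using calculation(3,4) by presburger
  ultimately show thesis using that by blast
qed

lemma rtranclp_adj_crossing_edge:
  "(adj E)\<^sup>*\<^sup>* y x \<Longrightarrow> y \<notin> V \<Longrightarrow> x \<in> V \<Longrightarrow> \<exists>a b. adj E a b \<and> a \<notin> V \<and> b \<in> V"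
  by (induction rule: converse_rtranclp_induct) auto

definition unicyclic_on :: "nat \<Rightarrow> nat set set \<Rightarrow> nat list \<Rightarrow> nat set \<Rightarrow> nat set set \<Rightarrow> bool" where
  "unicyclic_on n E vs V H \<longleftrightarrow> set vs \<subseteq> V \<and> V \<subseteq> {1..n} \<and> cycle_edges vs \<subseteq> H \<and> H \<subseteq> E \<and>
     (\<forall>e\<in>H. e \<subseteq> V) \<and> (\<forall>x\<in>V. (adj H)\<^sup>*\<^sup>* x (hd vs)) \<and>
     (\<forall>C'. is_cycle_in H C' \<longrightarrow> C' = cycle_edges vs)"

lemma unicyclic_on_cycle:
  assumes "distinct vs" "3 \<le> length vs" "cycle_edges vs \<subseteq> E" "set vs \<subseteq> {1..n}"
  shows "unicyclic_on n E vs (set vs) (cycle_edges vs)"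
proof -
  have "hd vs \<in> set vs" using assms(2) by (cases vs) auto
  then have "\<forall>x\<in>set vs. (adj (cycle_edges vs))\<^sup>*\<^sup>* x (hd vs)"
    using cycle_vertices_connected[OF assms(1)] assms(2) by simp
  moreover have "\<forall>C'. is_cycle_in (cycle_edges vs) C' \<longrightarrow> C' = cycle_edges vs"
    using cycle_edges_subset_imp_eq[OF assms(1,2)] unfolding is_cycle_in_iff by blast
  moreover have "\<forall>e\<in>cycle_edges vs. e \<subseteq> set vs" using cycle_edges_subset_set by blast
  ultimately show ?thesis using assms(3,4) unfolding unicyclic_on_def by blast
qed

text \<open>Attaching a new vertex by a single edge creates no cycle, since a vertex on a cycle
  has two neighbours on it.\<close>

lemma unicyclic_on_insert:
  assumes U: "unicyclic_on n E vs V H" and v: "v \<notin> V" "v \<in> {1..n}" and p: "p \<in> V" "adj E v p"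
  shows "unicyclic_on n E vs (insert v V) (insert {v, p} H)"
proof -
  let ?H = "insert {v, p} H"
  have U': "set vs \<subseteq> V" "V \<subseteq> {1..n}" "cycle_edges vs \<subseteq> H" "H \<subseteq> E"
    and HV: "\<forall>e\<in>H. e \<subseteq> V" and conn: "\<forall>x\<in>V. (adj H)\<^sup>*\<^sup>* x (hd vs)"
    and uniq: "\<forall>C'. is_cycle_in H C' \<longrightarrow> C' = cycle_edges vs"
    using U by (simp_all add: unicyclic_on_def)
  have nbrs: "{z. adj ?H v z} \<subseteq> {p}" using HV v(1) by (auto simp: adj_def doubleton_eq_iff)
  have uniq': "C' = cycle_edges vs" if C': "is_cycle_in ?H C'" for C'
  proof -
    obtain ws where ws: "distinct ws" "3 \<le> length ws" "C' = cycle_edges ws" "C' \<subseteq> ?H"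
      using C' unfolding is_cycle_in_iff by blast
    have "v \<notin> set ws"
    proof
      assume "v \<in> set ws"
      then have "card {z. adj (cycle_edges ws) v z} = 2" by (rule card_cycle_neighbours[OF ws(1,2)])
      moreover have "{z. adj (cycle_edges ws) v z} \<subseteq> {p}" using nbrs ws(3,4) adj_mono by blast
      then have "card {z. adj (cycle_edges ws) v z} \<le> card {p}" by (intro card_mono) auto
      ultimately show False by simp
    qed
    then have "C' \<subseteq> H" using ws(3,4) cycle_edges_subset_set by blast
    then have "is_cycle_in H C'" unfolding is_cycle_in_iff using ws(1-3) by blast
    then show ?thesis using uniq by blast
  qed
  have conn': "(adj ?H)\<^sup>*\<^sup>* x (hd vs)" if "x \<in> insert v V" for x
  proof (cases "x = v")
    case True
    have "adj ?H v p" using p(2) by (auto simp: adj_def)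
    moreover have "(adj ?H)\<^sup>*\<^sup>* p (hd vs)" using conn p(1) rtranclp_adj_mono[of H p "hd vs" ?H] by blast
    ultimately show ?thesis using True by (simp add: converse_rtranclp_into_rtranclp)
  next
    case False
    then show ?thesis using conn that rtranclp_adj_mono[of H x "hd vs" ?H] by blast
  qed
  have "{v, p} \<in> E" using p(2) by (simp add: adj_def)
  then show ?thesis
    unfolding unicyclic_on_def using U' HV v(2) p(1) uniq' conn' by blast
qed

lemma spanning_unicyclic_nonbip_from_odd_cycle:
  assumes sg: "simple_graph n E" and con: "connected_graph n E"
    and cyc: "distinct vs" "3 \<le> length vs" "cycle_edges vs \<subseteq> E" "odd (length vs)"
  obtains H C where "spanning_unicyclic_nonbip n E H C"
proof -
  have vs_n: "set vs \<subseteq> {1..n}" using simple_graph_cycle_vertices[OF sg cyc(1) _ cyc(3)] cyc(2) by simp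
  define P where "P V \<longleftrightarrow> (\<exists>H. unicyclic_on n E vs V H)" for V
  have "P (set vs)" using unicyclic_on_cycle[OF cyc(1-3) vs_n] by (auto simp: P_def)
  then obtain V where "P V" and max: "\<And>V'. P V' \<Longrightarrow> card ({1..n} - V) \<le> card ({1..n} - V')"
    using ex_has_least_nat[of P "set vs" "\<lambda>V. card ({1..n} - V)"] by blast
  then obtain H where U: "unicyclic_on n E vs V H" unfolding P_def by blast
  then have U': "set vs \<subseteq> V" "V \<subseteq> {1..n}" "cycle_edges vs \<subseteq> H" "H \<subseteq> E"
    "\<forall>x\<in>V. (adj H)\<^sup>*\<^sup>* x (hd vs)" "\<forall>C'. is_cycle_in H C' \<longrightarrow> C' = cycle_edges vs"
    by (simp_all add: unicyclic_on_def)
  have hd: "hd vs \<in> set vs" using cyc(2) by (cases vs) auto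
  have "V = {1..n}"
  proof (rule ccontr)
    assume "V \<noteq> {1..n}"
    then obtain y where y: "y \<in> {1..n}" "y \<notin> V" using U'(2) by blast
    have "(adj E)\<^sup>*\<^sup>* y (hd vs)" using con y(1) hd vs_n unfolding connected_graph_def by blast
    moreover have "hd vs \<in> V" using hd U'(1) by blast
    ultimately obtain a b where ab: "adj E a b" "a \<notin> V" "b \<in> V"
      using rtranclp_adj_crossing_edge[of E y "hd vs" V] y(2) by blast
    have a: "a \<in> {1..n}" using simple_graph_adj_vertex[OF sg ab(1)] .
    have "P (insert a V)"
      unfolding P_def by (rule exI[of _ "insert {a, b} H"]) (rule unicyclic_on_insert[OF U ab(2) a ab(3,1)])
    then have le: "card ({1..n} - V) \<le> card ({1..n} - insert a V)" by (rule max)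
    have eq: "{1..n} - insert a V = ({1..n} - V) - {a}" by blast
    have lt: "card (({1..n} - V) - {a}) < card ({1..n} - V)"
      using a ab(2) by (intro card_Diff1_less) auto
    show False using le lt unfolding eq by linarith
  qed
  then have "connected_graph n H"
    using U'(5) unfolding connected_graph_def by (meson rtranclp_adj_sym rtranclp_trans)
  moreover have "is_cycle_in H (cycle_edges vs)"
    unfolding is_cycle_in_iff using U'(3) cyc(1,2) by blast
  moreover have "odd (card (cycle_edges vs))" using card_cycle_edges[OF cyc(1,2)] cyc(4) by simp
  ultimately have "spanning_unicyclic_nonbip n E H (cycle_edges vs)"
    using U'(4,6) unfolding spanning_unicyclic_nonbip_def by blast
  then show thesis by (rule that)
qed

lemma exists_spanning_unicyclic_nonbip:
  assumes "simple_graph n E" "connected_graph n E" "\<not> bipartite n E"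
  obtains H C where "spanning_unicyclic_nonbip n E H C"
proof -
  obtain w where "walk E w" "w \<noteq> []" "hd w = last w" "even (length w)"
    using odd_closed_walk_if_not_bipartite[OF assms] .
  then obtain vs where "distinct vs" "3 \<le> length vs" "cycle_edges vs \<subseteq> E" "odd (length vs)"
    by (rule odd_cycle_if_odd_closed_walk)
  then show thesis using spanning_unicyclic_nonbip_from_odd_cycle[OF assms(1,2)] that by blast
qed

lemma finite_dH_values:
  assumes "simple_graph n E"
  shows "finite {dH H C | H C. spanning_unicyclic_nonbip n E H C}"
proof (rule finite_subset)
  show "{dH H C | H C. spanning_unicyclic_nonbip n E H C} \<subseteq> (\<lambda>(H, C). dH H C) ` (Pow E \<times> Pow E)"
  proof
    fix d assume "d \<in> {dH H C | H C. spanning_unicyclic_nonbip n E H C}"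
    then obtain H C where d: "d = dH H C" and "spanning_unicyclic_nonbip n E H C" by blast
    then have "H \<subseteq> E" "C \<subseteq> H" unfolding spanning_unicyclic_nonbip_def is_cycle_in_iff by blast+
    then show "d \<in> (\<lambda>(H, C). dH H C) ` (Pow E \<times> Pow E)" using d by (auto intro!: image_eqI[of _ _ "(H, C)"])
  qed
  show "finite ((\<lambda>(H, C). dH H C) ` (Pow E \<times> Pow E))"
    using simple_graph_finite[OF assms] by simp
qed

theorem corollary2p8:
  fixes n :: nat and E :: "nat set set"
  assumes "simple_graph n E" and "connected_graph n E" and "\<not> bipartite n E"
  shows "dstab n (edge_ideal n E :: ('k::field) mpoly set)
           \<le> Min {dH H C | H C. spanning_unicyclic_nonbip n E H C}"
proof -
  let ?D = "{dH H C | H C. spanning_unicyclic_nonbip n E H C}"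
  obtain H0 C0 where "spanning_unicyclic_nonbip n E H0 C0"
    using exists_spanning_unicyclic_nonbip[OF assms] .
  then have "Min ?D \<in> ?D" using finite_dH_values[OF assms(1)] by (intro Min_in) auto
  then obtain H C where "Min ?D = dH H C" "spanning_unicyclic_nonbip n E H C" by blast
  then show ?thesis using dstab_edge_ideal_le_dH[OF assms(1)] by simp
qed

end
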